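(* Let $d\ge0$, and consider the Gaussian broadcast model on $P=\mathbb Z_{\ge0}^{d+1}$ in the critical case $\alpha_i=1/i$ for all $i\in[d+1]$. Fix $t\ge0$ and reals $c_u\ge0$ ($u\in L_t$) with $\sum_{u\in L_t}c_u=1$, and let $\zeta=\sum_{u\in L_t}c_uX_u$. Let $\Gamma$ be the random chain that starts at $u\in L_t$ with probability $c_u$ and, at each step, moves from its current vertex $x\ne\mathbf 0$ to an element of $\mathfrak p(x)$ chosen uniformly at random (independently of previous steps), stopping when it reaches $\mathbf 0$. For $w\in P$ write $\mathbb P(w\in\Gamma)$ for the probability that $\Gamma$ visits $w$. Then $$\operatorname{Var}(\zeta)\ge\frac1{d+1}\sum_{w\in P}\mathbb P(w\in\Gamma)^2.$$
   Context: Gaussian broadcast model on the finite model: $P=\mathbb{Z}_{\ge0}^{d+1}$ with $u\le v$ iff $v-u\in\mathbb{Z}_{\ge0}^{d+1}$; $L_t$ = tuples with coordinate sum $t$; $\mathfrak p(v)$ = set of elements covered by $v$ (the vectors $v-e_i$ with $v_i>0$), so $|\mathfrak p(v)|$ is the number of positive coordinates; $\mathbf 0$ is the minimal element. Let $X_0\sim\mathcal N(0,1)$, independently i.i.d. $W_{u\to v}\sim\mathcal N(0,1)$ for covering pairs $u\lessdot v$, $X_{\mathbf 0}=X_0$, and $X_v=\alpha_{|\mathfrak p(v)|}\sum_{u\in\mathfrak p(v)}(X_u+W_{u\to v})$ for $v\ne\mathbf 0$. *)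

theory Defs
  imports "HOL-Probability.Probability"
begin

type_synonym pt = "nat \<Rightarrow> nat"

text \<open>The poset P = Z_{>=0}^{d+1}: coordinates indexed by 0..d, zero elsewhere.\<close>
definition Pset :: "nat \<Rightarrow> pt set" where
  "Pset d = {v. \<forall>i>d. v i = 0}"

definition Lev :: "nat \<Rightarrow> nat \<Rightarrow> pt set" where
  "Lev d t = {v \<in> Pset d. (\<Sum>i\<le>d. v i) = t}"

definition preds :: "nat \<Rightarrow> pt \<Rightarrow> pt set" where
  "preds d v = {v(i := v i - 1) | i. i \<le> d \<and> 0 < v i}"

text \<open>Downward random walk: from x (not 0) move to a uniformly random element of preds x;
  stop at 0. The first argument is step budget (fuel); it records the visited path.\<close>
primrec walk :: "nat \<Rightarrow> nat \<Rightarrow> pt \<Rightarrow> pt list pmf" where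
  "walk d 0 x = return_pmf [x]"
| "walk d (Suc n) x =
     (if x = (\<lambda>_. 0) then return_pmf [x]
      else pmf_of_set (preds d x) \<bind> (\<lambda>y. map_pmf (\<lambda>p. x # p) (walk d n y)))"

text \<open>The random chain Gamma: start at u in L_t with probability c u, then walk down
  (reaching 0 after exactly t steps).\<close>
definition Gamma :: "nat \<Rightarrow> nat \<Rightarrow> (pt \<Rightarrow> real) \<Rightarrow> pt list pmf" where
  "Gamma d t c = embed_pmf (\<lambda>u. if u \<in> Lev d t then c u else 0) \<bind> (\<lambda>u. walk d t u)"

definition visit_prob :: "nat \<Rightarrow> nat \<Rightarrow> (pt \<Rightarrow> real) \<Rightarrow> pt \<Rightarrow> real" where
  "visit_prob d t c w = measure_pmf.prob (Gamma d t c) {p. w \<in> set p}"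

text \<open>Index set of the Gaussian inputs: None for X_0, Some (u,v) for W_{u->v}.\<close>
definition noise_idx :: "nat \<Rightarrow> (pt \<times> pt) option set" where
  "noise_idx d = {None} \<union> Some ` {(u, v). v \<in> Pset d \<and> u \<in> preds d v}"

end

theory Submission
  imports Defs
begin

text \<open>
  Unrolling the recursion level by level writes \<open>\<zeta>\<close> as a linear combination of the independent
  standard Gaussians, so its variance is the sum of the squared coefficients. If \<open>\<mu>\<^sub>n\<close> is the law
  of \<open>\<Gamma>\<close> on \<open>L\<^sub>n\<close>, so that \<open>\<mu>\<^sub>n(u) = P(u \<in> \<Gamma>)\<close>, then in the expansion of
  \<open>\<Sum>\<^sub>u \<mu>\<^sub>n(u) X\<^sub>u\<close> every edge into \<open>u\<close> carries the coefficient \<open>\<mu>\<^sub>n(u) / |p(u)|\<close>, while the remaining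
  part is \<open>\<Sum>\<^sub>y \<mu>\<^sub>n\<^sub>-\<^sub>1(y) X\<^sub>y\<close>. Hence level \<open>n\<close> contributes \<open>\<Sum>\<^sub>u \<mu>\<^sub>n(u)\<^sup>2 / |p(u)| \<ge> \<Sum>\<^sub>u \<mu>\<^sub>n(u)\<^sup>2 / (d+1)\<close>
  to the variance, and summing over the levels gives the bound.
\<close>

section \<open>Levels and covered elements\<close>

definition level :: "nat \<Rightarrow> pt \<Rightarrow> nat" where
  "level d w = (\<Sum>i\<le>d. w i)"

definition Below :: "nat \<Rightarrow> nat \<Rightarrow> pt set" where
  "Below d n = {v \<in> Pset d. level d v \<le> n}"

lemma Lev_eq_level: "Lev d n = {v \<in> Pset d. level d v = n}"
  unfolding Lev_def level_def by simp

lemma preds_eq_image: "preds d v = (\<lambda>i. v(i := v i - 1)) ` {i. i \<le> d \<and> 0 < v i}"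
  unfolding preds_def by auto

lemma finite_preds: "finite (preds d v)"
  unfolding preds_eq_image by simp

lemma card_preds_le: "card (preds d v) \<le> d + 1"
proof -
  have "card (preds d v) \<le> card {i. i \<le> d \<and> 0 < v i}"
    unfolding preds_eq_image by (rule card_image_le) simp
  also have "\<dots> \<le> card {..d}" by (intro card_mono) auto
  finally show ?thesis by simp
qed

lemma preds_nonempty:
  assumes "v \<in> Pset d" "v \<noteq> (\<lambda>_. 0)"
  shows "preds d v \<noteq> {}"
proof -
  obtain i where "v i \<noteq> 0" using assms(2) by auto
  moreover have "i \<le> d" using assms(1) \<open>v i \<noteq> 0\<close> unfolding Pset_def by (metis (mono_tags) mem_Collect_eq leI)
  ultimately show ?thesis unfolding preds_def by auto
qed

lemma card_preds_pos: "v \<in> Pset d \<Longrightarrow> v \<noteq> (\<lambda>_. 0) \<Longrightarrow> card (preds d v) > 0"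
  using preds_nonempty finite_preds by (simp add: card_gt_0_iff)

lemma preds_in_Pset: "y \<in> preds d v \<Longrightarrow> v \<in> Pset d \<Longrightarrow> y \<in> Pset d"
  unfolding preds_def Pset_def by auto

lemma level_preds: "y \<in> preds d v \<Longrightarrow> Suc (level d y) = level d v"
proof -
  assume "y \<in> preds d v"
  then obtain i where i: "i \<le> d" "0 < v i" "y = v(i := v i - 1)" unfolding preds_def by auto
  have "level d v = v i + (\<Sum>j\<in>{..d} - {i}. v j)"
    unfolding level_def using i by (subst sum.remove[of _ i]) auto
  moreover have "level d y = (v i - 1) + (\<Sum>j\<in>{..d} - {i}. v j)"
    unfolding level_def using i by (subst sum.remove[of _ i]) auto
  ultimately show ?thesis using i by simp
qed

lemma preds_subset_Lev: "v \<in> Lev d (Suc n) \<Longrightarrow> preds d v \<subseteq> Lev d n"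
  unfolding Lev_eq_level using preds_in_Pset level_preds by fastforce

lemma Lev_Suc_nonzero: "v \<in> Lev d (Suc n) \<Longrightarrow> v \<noteq> (\<lambda>_. 0)"
  unfolding Lev_def by auto

lemma Lev_0: "Lev d 0 = {\<lambda>_. 0}"
  unfolding Lev_def Pset_def by (auto simp: fun_eq_iff) (metis atMost_iff not_le)

lemma finite_Below: "finite (Below d n)"
proof (rule finite_subset)
  have "v i \<le> n" if "v \<in> Below d n" "i \<le> d" for v i
    using that member_le_sum[of i "{..d}" v] unfolding Below_def level_def by auto
  then show "Below d n \<subseteq> {f. \<forall>i. (i \<in> {..d} \<longrightarrow> f i \<in> {..n}) \<and> (i \<notin> {..d} \<longrightarrow> f i = 0)}"
    unfolding Below_def Pset_def by auto
  show "finite {f. \<forall>i. (i \<in> {..d} \<longrightarrow> f i \<in> {..n}) \<and> (i \<notin> {..d} \<longrightarrow> f i = (0::nat))}"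
    by (rule finite_set_of_finite_funs) auto
qed

lemma finite_Lev: "finite (Lev d n)"
  by (rule finite_subset[OF _ finite_Below[of d n]]) (auto simp: Lev_eq_level Below_def)

lemma Below_Suc: "Below d (Suc n) = Lev d (Suc n) \<union> Below d n"
  unfolding Below_def Lev_eq_level by auto

lemma Lev_Below_disjoint: "Lev d (Suc n) \<inter> Below d n = {}"
  unfolding Below_def Lev_eq_level by auto

lemma sum_Lev_Suc_preds_swap:
  "(\<Sum>u\<in>Lev d (Suc n). \<Sum>y\<in>preds d u. g u y) =
   (\<Sum>y\<in>Lev d n. \<Sum>u\<in>Lev d (Suc n). if y \<in> preds d u then g u y else 0)"
proof -
  have "(\<Sum>u\<in>Lev d (Suc n). \<Sum>y\<in>preds d u. g u y) =
        (\<Sum>u\<in>Lev d (Suc n). \<Sum>y\<in>Lev d n. if y \<in> preds d u then g u y else 0)"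
  proof (rule sum.cong[OF refl])
    fix u assume "u \<in> Lev d (Suc n)"
    then have "preds d u \<subseteq> Lev d n" by (rule preds_subset_Lev)
    then show "(\<Sum>y\<in>preds d u. g u y) = (\<Sum>y\<in>Lev d n. if y \<in> preds d u then g u y else 0)"
      using finite_Lev by (simp add: sum.If_cases Int_absorb1 inf_commute)
  qed
  also have "\<dots> = (\<Sum>y\<in>Lev d n. \<Sum>u\<in>Lev d (Suc n). if y \<in> preds d u then g u y else 0)"
    by (rule sum.swap)
  finally show ?thesis .
qed

section \<open>Visit probabilities of the downward walk\<close>

lemma level_le_walk_start:
  assumes "y \<in> Pset d" "p \<in> set_pmf (walk d n y)" "z \<in> set p"
  shows "level d z \<le> level d y"
  using assms
proof (induction n arbitrary: y p)
  case 0
  then show ?case by simp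
next
  case (Suc n)
  show ?case
  proof (cases "y = (\<lambda>_. 0)")
    case True
    with Suc.prems show ?thesis by simp
  next
    case False
    with Suc.prems obtain y' p' where y': "y' \<in> preds d y" "p' \<in> set_pmf (walk d n y')" "p = y # p'"
      using finite_preds[of d y] preds_nonempty[of y d] by auto
    show ?thesis
    proof (cases "z = y")
      case False
      with Suc.prems y' have "level d z \<le> level d y'"
        using Suc.IH[of y' p'] preds_in_Pset by auto
      then show ?thesis using level_preds[OF y'(1)] by simp
    qed simp
  qed
qed

definition walk_visit :: "nat \<Rightarrow> nat \<Rightarrow> pt \<Rightarrow> pt \<Rightarrow> real" where
  "walk_visit d n u w = measure_pmf.prob (walk d n u) {p. w \<in> set p}"

lemma measure_pmf_prob_bind:
  "measure_pmf.prob (bind_pmf M N) A = (\<integral>x. measure_pmf.prob (N x) A \<partial>M)"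
  unfolding measure_pmf_bind
  by (rule measure_pmf.measure_bind[where N="count_space UNIV"])
     (auto simp: space_subprob_algebra measure_pmf.subprob_space_axioms)

lemma walk_visit_0: "walk_visit d 0 u w = (if w = u then 1 else 0)"
  unfolding walk_visit_def by simp

lemma walk_visit_Suc:
  assumes "u \<in> Pset d" "u \<noteq> (\<lambda>_. 0)"
  shows "walk_visit d (Suc n) u w =
    (if w = u then 1 else (\<Sum>y\<in>preds d u. walk_visit d n y w) / card (preds d u))"
  using assms finite_preds[of d u] preds_nonempty[of u d]
  by (auto simp: walk_visit_def measure_pmf_prob_bind integral_pmf_of_set vimage_def)

lemma walk_visit_eq_0: "y \<in> Pset d \<Longrightarrow> level d y < level d w \<Longrightarrow> walk_visit d n y w = 0"
  unfolding walk_visit_def measure_pmf_zero_iff using level_le_walk_start[of y d _ n w] by fastforce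

text \<open>
  For a mass distribution \<open>\<mu>\<close> on level \<open>n\<close>, \<open>visit_mass d n \<mu> w\<close> is the probability that the walk
  started from \<open>\<mu>\<close> visits \<open>w\<close>, and \<open>push_down d n \<mu>\<close> is its distribution on level \<open>n\<close> after one
  step from level \<open>Suc n\<close>.
\<close>

definition visit_mass :: "nat \<Rightarrow> nat \<Rightarrow> (pt \<Rightarrow> real) \<Rightarrow> pt \<Rightarrow> real" where
  "visit_mass d n \<mu> w = (\<Sum>u\<in>Lev d n. \<mu> u * walk_visit d n u w)"

definition push_down :: "nat \<Rightarrow> nat \<Rightarrow> (pt \<Rightarrow> real) \<Rightarrow> pt \<Rightarrow> real" where
  "push_down d n \<mu> y =
     (\<Sum>u\<in>Lev d (Suc n). if y \<in> preds d u then \<mu> u / card (preds d u) else 0)"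

lemma visit_mass_0: "visit_mass d 0 \<mu> w = (if w = (\<lambda>_. 0) then \<mu> (\<lambda>_. 0) else 0)"
  unfolding visit_mass_def Lev_0 by (simp add: walk_visit_0)

lemma visit_mass_eq_0: "w \<in> Pset d \<Longrightarrow> n < level d w \<Longrightarrow> visit_mass d n \<mu> w = 0"
  unfolding visit_mass_def by (intro sum.neutral) (auto simp: Lev_eq_level walk_visit_eq_0)

lemma visit_mass_Suc:
  assumes w: "w \<in> Pset d"
  shows "visit_mass d (Suc n) \<mu> w =
    (if w \<in> Lev d (Suc n) then \<mu> w else visit_mass d n (push_down d n \<mu>) w)"
proof -
  have step: "visit_mass d (Suc n) \<mu> w = (\<Sum>u\<in>Lev d (Suc n).
      \<mu> u * (if w = u then 1 else (\<Sum>y\<in>preds d u. walk_visit d n y w) / card (preds d u)))"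
    unfolding visit_mass_def
    by (intro sum.cong refl) (simp add: walk_visit_Suc Lev_def Lev_Suc_nonzero)
  show ?thesis
  proof (cases "w \<in> Lev d (Suc n)")
    case True
    have "walk_visit d n y w = 0" if "u \<in> Lev d (Suc n)" "y \<in> preds d u" for u y
      using preds_subset_Lev[OF that(1)] that(2) True
      by (intro walk_visit_eq_0) (auto simp: Lev_eq_level)
    then have "visit_mass d (Suc n) \<mu> w = (\<Sum>u\<in>Lev d (Suc n). if w = u then \<mu> u else 0)"
      unfolding step by (intro sum.cong refl) simp
    with True finite_Lev show ?thesis by simp
  next
    case False
    have "visit_mass d (Suc n) \<mu> w =
        (\<Sum>u\<in>Lev d (Suc n). \<Sum>y\<in>preds d u. \<mu> u / card (preds d u) * walk_visit d n y w)"
      unfolding step using False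
      by (intro sum.cong refl) (auto simp: sum_distrib_left sum_divide_distrib)
    also have "\<dots> = visit_mass d n (push_down d n \<mu>) w"
      unfolding sum_Lev_Suc_preds_swap visit_mass_def push_down_def
      by (intro sum.cong refl) (auto simp: sum_distrib_right intro!: sum.cong)
    finally show ?thesis using False by simp
  qed
qed

definition visit_energy :: "nat \<Rightarrow> nat \<Rightarrow> (pt \<Rightarrow> real) \<Rightarrow> real" where
  "visit_energy d n \<mu> = (\<Sum>w\<in>Below d n. (visit_mass d n \<mu> w)\<^sup>2)"

lemma visit_energy_0: "visit_energy d 0 \<mu> = (\<mu> (\<lambda>_. 0))\<^sup>2"
proof -
  have "Below d 0 = Lev d 0" unfolding Below_def Lev_eq_level by auto
  then show ?thesis unfolding visit_energy_def Lev_0 by (simp add: visit_mass_0)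
qed

lemma visit_energy_Suc:
  "visit_energy d (Suc n) \<mu> = (\<Sum>u\<in>Lev d (Suc n). (\<mu> u)\<^sup>2) + visit_energy d n (push_down d n \<mu>)"
proof -
  have "visit_energy d (Suc n) \<mu> = (\<Sum>w\<in>Lev d (Suc n). (visit_mass d (Suc n) \<mu> w)\<^sup>2)
      + (\<Sum>w\<in>Below d n. (visit_mass d (Suc n) \<mu> w)\<^sup>2)"
    unfolding visit_energy_def Below_Suc
    using Lev_Below_disjoint finite_Lev finite_Below by (simp add: sum.union_disjoint)
  also have "(\<Sum>w\<in>Lev d (Suc n). (visit_mass d (Suc n) \<mu> w)\<^sup>2) = (\<Sum>u\<in>Lev d (Suc n). (\<mu> u)\<^sup>2)"
    by (intro sum.cong refl) (auto simp: visit_mass_Suc Lev_def)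
  also have "(\<Sum>w\<in>Below d n. (visit_mass d (Suc n) \<mu> w)\<^sup>2) = visit_energy d n (push_down d n \<mu>)"
    unfolding visit_energy_def
    by (intro sum.cong refl) (auto simp: visit_mass_Suc Below_def Lev_eq_level)
  finally show ?thesis .
qed

section \<open>Variance of a combination of independent standard Gaussians\<close>

lemma std_normal_moments:
  assumes "prob_space M" and Y: "distributed M lborel Y std_normal_density"
  shows "integrable M Y" "integral\<^sup>L M Y = 0"
    "integrable M (\<lambda>x. Y x * Y x)" "integral\<^sup>L M (\<lambda>x. Y x * Y x) = 1"
proof -
  interpret prob_space M by fact
  have nonneg: "\<And>x. 0 \<le> std_normal_density x" by (simp add: normal_density_nonneg)
  show "integrable M Y"
    using distributed_integrable[OF Y, of "\<lambda>x. x"] nonneg integrable_std_normal_moment[of 1] by simp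
  show "integral\<^sup>L M Y = 0" by (rule standard_normal_distributed_expectation[OF Y])
  have "integrable M (\<lambda>x. (Y x)\<^sup>2)"
    using distributed_integrable[OF Y, of "\<lambda>x. x\<^sup>2"] nonneg integrable_std_normal_moment[of 2] by simp
  then show "integrable M (\<lambda>x. Y x * Y x)" by (simp add: power2_eq_square)
  have "integral\<^sup>L lborel (\<lambda>x. std_normal_density x * x ^ (2 * 1)) = 1"
    by (subst integral_std_normal_moment_even) (simp add: fact_numeral)
  then have "integral\<^sup>L M (\<lambda>x. (Y x)\<^sup>2) = 1"
    using distributed_integral[OF Y, of "\<lambda>x. x\<^sup>2"] nonneg by simp
  then show "integral\<^sup>L M (\<lambda>x. Y x * Y x) = 1" by (simp add: power2_eq_square)
qed

lemma indep_std_normal_product: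
  assumes P: "prob_space M" and indep: "prob_space.indep_vars M (\<lambda>_. borel) G I"
    and gauss: "\<And>i. i \<in> I \<Longrightarrow> distributed M lborel (G i) std_normal_density"
    and ij: "i \<in> I" "j \<in> I"
  shows "integrable M (\<lambda>x. G i x * G j x)"
    and "integral\<^sup>L M (\<lambda>x. G i x * G j x) = (if i = j then 1 else 0)"
proof -
  interpret prob_space M by fact
  note moments = std_normal_moments[OF P gauss]
  have "integrable M (\<lambda>x. G i x * G j x) \<and> integral\<^sup>L M (\<lambda>x. G i x * G j x) = (if i = j then 1 else 0)"
  proof (cases "i = j")
    case False
    have ind: "indep_vars (\<lambda>_. borel) G {i, j}"
      by (rule indep_vars_subset[OF indep]) (use ij in auto)
    have "integrable M (\<lambda>\<omega>. \<Prod>k\<in>{i, j}. G k \<omega>)"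
      by (rule indep_vars_integrable[OF _ ind]) (use moments ij in auto)
    moreover have "integral\<^sup>L M (\<lambda>\<omega>. \<Prod>k\<in>{i, j}. G k \<omega>) = (\<Prod>k\<in>{i, j}. integral\<^sup>L M (G k))"
      by (rule indep_vars_lebesgue_integral[OF _ ind]) (use moments ij in auto)
    ultimately show ?thesis using False moments ij by simp
  qed (use moments ij in simp)
  then show "integrable M (\<lambda>x. G i x * G j x)"
    and "integral\<^sup>L M (\<lambda>x. G i x * G j x) = (if i = j then 1 else 0)" by auto
qed

lemma variance_lincomb_indep_std_normal:
  assumes P: "prob_space M" and indep: "prob_space.indep_vars M (\<lambda>_. borel) G I"
    and gauss: "\<And>i. i \<in> I \<Longrightarrow> distributed M lborel (G i) std_normal_density"
    and S: "finite S" "S \<subseteq> I"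
    and f: "\<And>\<omega>. \<omega> \<in> space M \<Longrightarrow> f \<omega> = (\<Sum>i\<in>S. a i * G i \<omega>)"
  shows "prob_space.variance M f = (\<Sum>i\<in>S. (a i)\<^sup>2)"
proof -
  interpret prob_space M by fact
  have gauss_S: "\<And>i. i \<in> S \<Longrightarrow> distributed M lborel (G i) std_normal_density" using gauss S by auto
  note product = indep_std_normal_product[OF P indep gauss]
  have "expectation f = expectation (\<lambda>\<omega>. \<Sum>i\<in>S. a i * G i \<omega>)"
    by (rule Bochner_Integration.integral_cong) (auto simp: f)
  also have "\<dots> = (\<Sum>i\<in>S. a i * expectation (G i))"
    by (subst Bochner_Integration.integral_sum) (auto intro!: std_normal_moments[OF P] gauss_S)
  also have "\<dots> = 0" using std_normal_moments[OF P gauss_S] by simp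
  finally have "expectation f = 0" .
  then have "variance f = expectation (\<lambda>\<omega>. \<Sum>i\<in>S. \<Sum>j\<in>S. a i * a j * (G i \<omega> * G j \<omega>))"
    by (intro Bochner_Integration.integral_cong)
       (auto simp: f power2_eq_square sum_distrib_left sum_distrib_right ac_simps)
  also have "\<dots> = (\<Sum>i\<in>S. \<Sum>j\<in>S. a i * a j * expectation (\<lambda>\<omega>. G i \<omega> * G j \<omega>))"
    using S product(1) by (simp add: Bochner_Integration.integral_sum subset_iff)
  also have "\<dots> = (\<Sum>i\<in>S. \<Sum>j\<in>S. a i * a j * (if i = j then 1 else 0))"
    using S by (intro sum.cong refl) (auto simp: product(2) subsetD)
  also have "\<dots> = (\<Sum>i\<in>S. (a i)\<^sup>2)"
    using S by (simp add: power2_eq_square if_distrib cong: if_cong)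
  finally show ?thesis .
qed

section \<open>Expanding a level combination into the Gaussian inputs\<close>

definition noise_upto :: "nat \<Rightarrow> nat \<Rightarrow> (pt \<times> pt) option set" where
  "noise_upto d n = {None} \<union> Some ` {(y, u). level d u \<le> n}"

definition edges_into :: "nat \<Rightarrow> nat \<Rightarrow> (pt \<times> pt) option set" where
  "edges_into d n = (\<lambda>(u, y). Some (y, u)) ` (SIGMA u:Lev d n. preds d u)"

definition edge_coeff :: "nat \<Rightarrow> (pt \<Rightarrow> real) \<Rightarrow> (pt \<times> pt) option \<Rightarrow> real" where
  "edge_coeff d \<mu> i = (case i of None \<Rightarrow> 0 | Some (y, u) \<Rightarrow> \<mu> u / card (preds d u))"

lemma finite_edges_into: "finite (edges_into d n)"
  unfolding edges_into_def using finite_Lev finite_preds by blast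

lemma edges_into_subset_noise_idx: "edges_into d n \<subseteq> noise_idx d"
  unfolding edges_into_def noise_idx_def by (auto simp: Lev_def)

lemma edges_into_subset_noise_upto: "edges_into d n \<subseteq> noise_upto d n"
  unfolding edges_into_def noise_upto_def by (auto simp: Lev_eq_level)

lemma edges_into_disjoint_noise_upto: "edges_into d (Suc n) \<inter> noise_upto d n = {}"
  unfolding edges_into_def noise_upto_def by (auto simp: Lev_eq_level)

lemma noise_upto_mono: "noise_upto d n \<subseteq> noise_upto d (Suc n)"
  unfolding noise_upto_def by auto

lemma sum_edges_into:
  "(\<Sum>i\<in>edges_into d n. f i) = (\<Sum>u\<in>Lev d n. \<Sum>y\<in>preds d u. f (Some (y, u)))"
proof -
  have "inj_on (\<lambda>(u, y). Some (y, u)) (SIGMA u:Lev d n. preds d u)"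
    by (auto simp: inj_on_def)
  then show ?thesis
    unfolding edges_into_def using finite_Lev finite_preds
    by (simp add: sum.reindex sum.Sigma case_prod_unfold)
qed

text \<open>This is where the factor \<open>1 / (d + 1)\<close> comes from: \<open>u\<close> has \<open>|p(u)| \<le> d + 1\<close> incoming edges.\<close>

lemma sum_sq_Lev_le_edge_coeff:
  "(\<Sum>u\<in>Lev d (Suc n). (\<mu> u)\<^sup>2) \<le> real (d + 1) * (\<Sum>i\<in>edges_into d (Suc n). (edge_coeff d \<mu> i)\<^sup>2)"
proof -
  have "(\<mu> u)\<^sup>2 \<le> real (d + 1) * (card (preds d u) * (\<mu> u / card (preds d u))\<^sup>2)"
    if "u \<in> Lev d (Suc n)" for u
  proof -
    define k where "k = real (card (preds d u))"
    have "0 < k" "k \<le> real (d + 1)"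
      using that card_preds_pos[OF _ Lev_Suc_nonzero] card_preds_le[of d u]
      by (auto simp: k_def Lev_def)
    then have "k * (\<mu> u)\<^sup>2 \<le> real (d + 1) * (\<mu> u)\<^sup>2" by (intro mult_right_mono) auto
    with \<open>0 < k\<close> show ?thesis by (simp add: k_def[symmetric] field_simps power2_eq_square)
  qed
  then have "(\<Sum>u\<in>Lev d (Suc n). (\<mu> u)\<^sup>2) \<le>
      real (d + 1) * (\<Sum>u\<in>Lev d (Suc n). card (preds d u) * (\<mu> u / card (preds d u))\<^sup>2)"
    unfolding sum_distrib_left by (rule sum_mono)
  also have "\<dots> = real (d + 1) * (\<Sum>i\<in>edges_into d (Suc n). (edge_coeff d \<mu> i)\<^sup>2)"
    unfolding sum_edges_into edge_coeff_def by simp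
  finally show ?thesis .
qed

lemma sum_union_disjoint_override:
  assumes "finite S" "finite E" "S \<inter> E = {}"
  shows "(\<Sum>i\<in>S \<union> E. h (if i \<in> E then g i else f i) i) = (\<Sum>i\<in>S. h (f i) i) + (\<Sum>i\<in>E. h (g i) i)"
proof -
  have "(\<Sum>i\<in>S. h (if i \<in> E then g i else f i) i) = (\<Sum>i\<in>S. h (f i) i)"
    using assms(3) by (intro sum.cong refl) auto
  then show ?thesis using assms by (simp add: sum.union_disjoint)
qed

locale broadcast_recursion =
  fixes M :: "'a measure" and d :: nat
    and X :: "pt \<Rightarrow> 'a \<Rightarrow> real" and G :: "(pt \<times> pt) option \<Rightarrow> 'a \<Rightarrow> real"
  assumes X0: "\<And>\<omega>. \<omega> \<in> space M \<Longrightarrow> X (\<lambda>_. 0) \<omega> = G None \<omega>"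
    and Xrec: "\<And>v \<omega>. v \<in> Pset d \<Longrightarrow> v \<noteq> (\<lambda>_. 0) \<Longrightarrow> \<omega> \<in> space M \<Longrightarrow>
        X v \<omega> = (1 / real (card (preds d v))) * (\<Sum>u\<in>preds d v. X u \<omega> + G (Some (u, v)) \<omega>)"
begin

lemma lincomb_Lev_Suc_expand:
  assumes \<omega>: "\<omega> \<in> space M"
  shows "(\<Sum>u\<in>Lev d (Suc n). \<mu> u * X u \<omega>) =
    (\<Sum>y\<in>Lev d n. push_down d n \<mu> y * X y \<omega>) + (\<Sum>i\<in>edges_into d (Suc n). edge_coeff d \<mu> i * G i \<omega>)"
proof -
  have "(\<Sum>u\<in>Lev d (Suc n). \<mu> u * X u \<omega>) =
      (\<Sum>u\<in>Lev d (Suc n). \<Sum>y\<in>preds d u. \<mu> u / card (preds d u) * X y \<omega>) +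
      (\<Sum>u\<in>Lev d (Suc n). \<Sum>y\<in>preds d u. \<mu> u / card (preds d u) * G (Some (y, u)) \<omega>)"
    unfolding sum.distrib[symmetric]
    by (intro sum.cong refl)
       (simp add: Xrec[OF _ Lev_Suc_nonzero \<omega>] Lev_def sum_distrib_left sum.distrib algebra_simps)
  also have "(\<Sum>u\<in>Lev d (Suc n). \<Sum>y\<in>preds d u. \<mu> u / card (preds d u) * X y \<omega>) =
      (\<Sum>y\<in>Lev d n. push_down d n \<mu> y * X y \<omega>)"
    unfolding sum_Lev_Suc_preds_swap push_down_def
    by (intro sum.cong refl) (auto simp: sum_distrib_right intro!: sum.cong)
  also have "(\<Sum>u\<in>Lev d (Suc n). \<Sum>y\<in>preds d u. \<mu> u / card (preds d u) * G (Some (y, u)) \<omega>) =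
      (\<Sum>i\<in>edges_into d (Suc n). edge_coeff d \<mu> i * G i \<omega>)"
    unfolding sum_edges_into edge_coeff_def by simp
  finally show ?thesis .
qed

lemma lincomb_Lev_noise_expansion:
  shows "\<exists>S a. finite S \<and> S \<subseteq> noise_idx d \<and> S \<subseteq> noise_upto d n \<and>
    (\<forall>\<omega>\<in>space M. (\<Sum>u\<in>Lev d n. \<mu> u * X u \<omega>) = (\<Sum>i\<in>S. a i * G i \<omega>)) \<and>
    visit_energy d n \<mu> \<le> real (d + 1) * (\<Sum>i\<in>S. (a i)\<^sup>2)"
proof (induction n arbitrary: \<mu>)
  case 0
  let ?a = "\<lambda>_. \<mu> (\<lambda>_. 0)"
  have "finite {None} \<and> {None} \<subseteq> noise_idx d \<and> {None} \<subseteq> noise_upto d 0"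
    by (simp add: noise_idx_def noise_upto_def)
  moreover have "\<forall>\<omega>\<in>space M. (\<Sum>u\<in>Lev d 0. \<mu> u * X u \<omega>) = (\<Sum>i\<in>{None}. ?a i * G i \<omega>)"
    by (simp add: Lev_0 X0)
  moreover have "visit_energy d 0 \<mu> \<le> real (d + 1) * (\<Sum>i\<in>{None}. (?a i)\<^sup>2)"
    by (simp add: visit_energy_0 distrib_right)
  ultimately show ?case by (intro exI[of _ "{None}"] exI[of _ ?a]) blast
next
  case (Suc n)
  obtain S a where S: "finite S" "S \<subseteq> noise_idx d" "S \<subseteq> noise_upto d n"
    and expand: "\<forall>\<omega>\<in>space M. (\<Sum>u\<in>Lev d n. push_down d n \<mu> u * X u \<omega>) = (\<Sum>i\<in>S. a i * G i \<omega>)"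
    and energy: "visit_energy d n (push_down d n \<mu>) \<le> real (d + 1) * (\<Sum>i\<in>S. (a i)\<^sup>2)"
    using Suc.IH[of "push_down d n \<mu>"] by blast
  define E where "E = edges_into d (Suc n)"
  define b where "b i = (if i \<in> E then edge_coeff d \<mu> i else a i)" for i
  have disj: "S \<inter> E = {}"
    using S(3) edges_into_disjoint_noise_upto unfolding E_def by blast
  have fin: "finite E" unfolding E_def by (rule finite_edges_into)
  have split: "(\<Sum>i\<in>S \<union> E. h (b i) i) = (\<Sum>i\<in>S. h (a i) i) + (\<Sum>i\<in>E. h (edge_coeff d \<mu> i) i)"
    for h :: "real \<Rightarrow> (pt \<times> pt) option \<Rightarrow> real"
    unfolding b_def using S(1) fin disj by (rule sum_union_disjoint_override)
  have "finite (S \<union> E)" using S(1) fin by simp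
  moreover have "S \<union> E \<subseteq> noise_idx d"
    using S(2) edges_into_subset_noise_idx unfolding E_def by blast
  moreover have "S \<union> E \<subseteq> noise_upto d (Suc n)"
    using S(3) noise_upto_mono edges_into_subset_noise_upto unfolding E_def by blast
  moreover have "(\<Sum>u\<in>Lev d (Suc n). \<mu> u * X u \<omega>) = (\<Sum>i\<in>S \<union> E. b i * G i \<omega>)"
    if "\<omega> \<in> space M" for \<omega>
    using lincomb_Lev_Suc_expand[OF that] expand that split[of "\<lambda>c i. c * G i \<omega>"]
    unfolding E_def by simp
  moreover have "visit_energy d (Suc n) \<mu> \<le> real (d + 1) * (\<Sum>i\<in>S \<union> E. (b i)\<^sup>2)"
    using visit_energy_Suc[of d n \<mu>] energy sum_sq_Lev_le_edge_coeff[of \<mu> d n]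
      split[of "\<lambda>c i. c\<^sup>2"]
    unfolding E_def by (simp add: distrib_left)
  ultimately show ?case by (intro exI[of _ "S \<union> E"] exI[of _ b]) blast
qed

end

lemma visit_prob_eq_visit_mass:
  assumes c_nonneg: "\<And>u. u \<in> Lev d t \<Longrightarrow> c u \<ge> 0" and c_sum: "(\<Sum>u\<in>Lev d t. c u) = 1"
  shows "visit_prob d t c w = visit_mass d t c w"
proof -
  define f where "f u = (if u \<in> Lev d t then c u else 0)" for u
  have f_nonneg: "\<And>u. 0 \<le> f u" unfolding f_def using c_nonneg by auto
  have "(\<integral>\<^sup>+u. ennreal (f u) \<partial>count_space UNIV) = (\<Sum>u\<in>Lev d t. ennreal (f u))"
    by (rule nn_integral_count_space') (auto simp: f_def finite_Lev)
  also have "\<dots> = ennreal (\<Sum>u\<in>Lev d t. f u)" using f_nonneg by simp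
  also have "\<dots> = 1" using c_sum by (simp add: f_def)
  finally have f_total: "(\<integral>\<^sup>+u. ennreal (f u) \<partial>count_space UNIV) = 1" .
  have "set_pmf (embed_pmf f) \<subseteq> Lev d t"
    using set_embed_pmf[OF f_nonneg f_total] unfolding f_def by auto
  then have "visit_prob d t c w = (\<Sum>u\<in>Lev d t. pmf (embed_pmf f) u *\<^sub>R walk_visit d t u w)"
    unfolding visit_prob_def Gamma_def f_def[symmetric] measure_pmf_prob_bind walk_visit_def[symmetric]
    by (intro integral_measure_pmf[OF finite_Lev]) auto
  also have "\<dots> = visit_mass d t c w"
    unfolding visit_mass_def pmf_embed_pmf[OF f_nonneg f_total] by (simp add: f_def)
  finally show ?thesis .
qed

lemma infsum_visit_prob_sq:
  assumes "\<And>u. u \<in> Lev d t \<Longrightarrow> c u \<ge> 0" and "(\<Sum>u\<in>Lev d t. c u) = 1"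
  shows "(\<Sum>\<^sub>\<infinity>w\<in>Pset d. (visit_prob d t c w)\<^sup>2) = visit_energy d t c"
proof -
  have "(\<Sum>\<^sub>\<infinity>w\<in>Pset d. (visit_prob d t c w)\<^sup>2) = (\<Sum>\<^sub>\<infinity>w\<in>Below d t. (visit_mass d t c w)\<^sup>2)"
    by (rule infsum_cong_neutral)
       (auto simp: visit_prob_eq_visit_mass[OF assms] Below_def visit_mass_eq_0)
  then show ?thesis unfolding visit_energy_def using finite_Below by simp
qed

theorem mainTheorem14:
  fixes M :: "'a measure" and d t :: nat
    and G :: "(pt \<times> pt) option \<Rightarrow> 'a \<Rightarrow> real"
    and X :: "pt \<Rightarrow> 'a \<Rightarrow> real"
    and c :: "pt \<Rightarrow> real"
  assumes "prob_space M"
    and indep: "prob_space.indep_vars M (\<lambda>_. borel) G (noise_idx d)"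
    and gauss: "\<And>i. i \<in> noise_idx d \<Longrightarrow> distributed M lborel (G i) std_normal_density"
    and X0: "\<And>\<omega>. \<omega> \<in> space M \<Longrightarrow> X (\<lambda>_. 0) \<omega> = G None \<omega>"
    and Xrec: "\<And>v \<omega>. v \<in> Pset d \<Longrightarrow> v \<noteq> (\<lambda>_. 0) \<Longrightarrow> \<omega> \<in> space M \<Longrightarrow>
        X v \<omega> = (1 / real (card (preds d v))) *
                  (\<Sum>u\<in>preds d v. X u \<omega> + G (Some (u, v)) \<omega>)"
    and c_nonneg: "\<And>u. u \<in> Lev d t \<Longrightarrow> c u \<ge> 0"
    and c_sum: "(\<Sum>u\<in>Lev d t. c u) = 1"
  shows "prob_space.variance M (\<lambda>\<omega>. \<Sum>u\<in>Lev d t. c u * X u \<omega>)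
           \<ge> 1 / real (d + 1) * (\<Sum>\<^sub>\<infinity>w\<in>Pset d. (visit_prob d t c w)\<^sup>2)"
proof -
  interpret broadcast_recursion M d X G
    using X0 Xrec by unfold_locales
  obtain S a where S: "finite S" "S \<subseteq> noise_idx d"
    and expand: "\<forall>\<omega>\<in>space M. (\<Sum>u\<in>Lev d t. c u * X u \<omega>) = (\<Sum>i\<in>S. a i * G i \<omega>)"
    and energy: "visit_energy d t c \<le> real (d + 1) * (\<Sum>i\<in>S. (a i)\<^sup>2)"
    using lincomb_Lev_noise_expansion[of t c] by blast
  have "prob_space.variance M (\<lambda>\<omega>. \<Sum>u\<in>Lev d t. c u * X u \<omega>) = (\<Sum>i\<in>S. (a i)\<^sup>2)"
    using expand by (intro variance_lincomb_indep_std_normal[OF \<open>prob_space M\<close> indep gauss S]) auto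
  with energy show ?thesis
    by (simp add: infsum_visit_prob_sq[OF c_nonneg c_sum] field_simps)
qed

end
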